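(* Let $\tau$ be a topology on $\omega^\omega$ such that the standard foliage tree $\mathbf S$ is a $\pi$-tree on $(\omega^\omega,\tau)$. Let $Y=\bigcap_{n\in\omega}U_n$, where each $U_n$ is an open $\pi$-dense subset of the Baire space $(\omega^\omega,\tau_{\mathcal N})$. Then $Y$, as a subspace of $(\omega^\omega,\tau)$, has a $\pi$-tree.
   Context: $\tau_{\mathcal N}$ is the product topology on $\omega^\omega$ ($\omega$ discrete); $(\omega^\omega,\tau_{\mathcal N})$ is the Baire space. A tree is a pair $(Q,<)$ with $<$ irreflexive transitive and every set of predecessors well-ordered; $\mathrm{sons}(x)$ = immediate successors of $x$; a branch is a maximal chain. A foliage tree is $\mathbf F=(\mathcal T,l)$ with $\mathcal T$ a tree and leaves $\mathbf F_x=l(x)$ at nodes $x$. The standard foliage tree $\mathbf S$ has skeleton $(\omega^{<\omega},\subsetneq)$ and leaves $\mathbf S_x=\{p\in\omega^\omega: x\subseteq p\}$. For $A\subseteq\omega^\omega$: $A$ is $\pi$-dense in the Baire space iff for every $y\in\omega^{<\omega}$ the set $\{n\in\omega:\mathbf S_{y^\frown\langle n\rangle}\subseteq A\}$ is infinite. $\mathrm{fruit}_{\mathbf F}(A)=\bigcap_{x\in A}\mathbf F_x$; $\mathrm{shoot}_{\mathbf F}(z)=\{\bigcup_{s\in C}\mathbf F_s:C$ cofinite in $\mathrm{sons}(z)\}$; $\mathrm{scope}_{\mathbf F}(p)=\{y:p\in\mathbf F_y\}$; $\gamma\gg\delta$ means every nonempty $D\in\delta$ contains some nonempty $G\in\gamma$.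 A Baire foliage tree on a space $X$ is a foliage tree whose skeleton is isomorphic to $(\omega^{<\omega},\subsetneq)$, all of whose leaves are open in $X$, which is locally strict (for each non-maximal $x$, $\mathbf F_x$ is the disjoint union of the $\mathbf F_s$, $s\in\mathrm{sons}(x)$), has strict branches (at least one node, and $\mathrm{fruit}_{\mathbf F}(B)$ is a singleton for every branch $B$), and whose leaf at the least node is $X$. $\mathbf F$ grows into $X$ if for every $p\in X$ and every neighbourhood $U$ of $p$ in $X$ there is $z\in\mathrm{scope}_{\mathbf F}(p)$ with $\mathrm{shoot}_{\mathbf F}(z)\gg\{U\}$. A $\pi$-tree on $X$ is a Baire foliage tree on $X$ that grows into $X$. *)

theory Defs
  imports "HOL-Analysis.Analysis" "HOL-Library.Sublist"
begin

text \<open>Skeleton (omega^<omega>, strict extension): finite sequences as nat lists,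
  ordered by strict prefix. A foliage tree with this skeleton is a leaf map
  from nat lists to subsets of the space.\<close>

definition sons :: "nat list \<Rightarrow> nat list set" where
  "sons x = {x @ [n] | n. True}"

definition skel_chain :: "nat list set \<Rightarrow> bool" where
  "skel_chain C \<longleftrightarrow> (\<forall>x\<in>C. \<forall>y\<in>C. prefix x y \<or> prefix y x)"

definition skel_branch :: "nat list set \<Rightarrow> bool" where
  "skel_branch B \<longleftrightarrow> skel_chain B \<and> (\<forall>C. skel_chain C \<and> B \<subseteq> C \<longrightarrow> C = B)"

definition fruit :: "(nat list \<Rightarrow> 'a set) \<Rightarrow> nat list set \<Rightarrow> 'a set" where
  "fruit F A = (\<Inter>x\<in>A. F x)"

definition shoot :: "(nat list \<Rightarrow> 'a set) \<Rightarrow> nat list \<Rightarrow> 'a set set" where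
  "shoot F z = {\<Union>s\<in>C. F s | C. C \<subseteq> sons z \<and> finite (sons z - C)}"

definition scope :: "(nat list \<Rightarrow> 'a set) \<Rightarrow> 'a \<Rightarrow> nat list set" where
  "scope F p = {y. p \<in> F y}"

definition pi_base_refines :: "'a set set \<Rightarrow> 'a set set \<Rightarrow> bool" (infix "\<ggreater>" 50) where
  "\<gamma> \<ggreater> \<delta> \<longleftrightarrow> (\<forall>D\<in>\<delta>. D \<noteq> {} \<longrightarrow> (\<exists>G\<in>\<gamma>. G \<noteq> {} \<and> G \<subseteq> D))"

definition locally_strict :: "(nat list \<Rightarrow> 'a set) \<Rightarrow> bool" where
  "locally_strict F \<longleftrightarrow> (\<forall>x. sons x \<noteq> {} \<longrightarrow>
      F x = (\<Union>s\<in>sons x. F s) \<and>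
      (\<forall>s\<in>sons x. \<forall>t\<in>sons x. s \<noteq> t \<longrightarrow> F s \<inter> F t = {}))"

definition strict_branches :: "(nat list \<Rightarrow> 'a set) \<Rightarrow> bool" where
  "strict_branches F \<longleftrightarrow> (\<forall>B. skel_branch B \<longrightarrow> (\<exists>p. fruit F B = {p}))"

definition baire_foliage_tree :: "'a topology \<Rightarrow> (nat list \<Rightarrow> 'a set) \<Rightarrow> bool" where
  "baire_foliage_tree X F \<longleftrightarrow>
     (\<forall>x. openin X (F x)) \<and> locally_strict F \<and> strict_branches F \<and> F [] = topspace X"

definition grows_into :: "'a topology \<Rightarrow> (nat list \<Rightarrow> 'a set) \<Rightarrow> bool" where
  "grows_into X F \<longleftrightarrow> (\<forall>p\<in>topspace X. \<forall>U. openin X U \<and> p \<in> U \<longrightarrow>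
      (\<exists>z\<in>scope F p. shoot F z \<ggreater> {U}))"

definition pi_tree :: "'a topology \<Rightarrow> (nat list \<Rightarrow> 'a set) \<Rightarrow> bool" where
  "pi_tree X F \<longleftrightarrow> baire_foliage_tree X F \<and> grows_into X F"

definition std_leaf :: "nat list \<Rightarrow> (nat \<Rightarrow> nat) set" where
  "std_leaf x = {p. \<forall>i<length x. p i = x ! i}"

definition baire_space :: "(nat \<Rightarrow> nat) topology" where
  "baire_space = product_topology (\<lambda>_. discrete_topology (UNIV :: nat set)) UNIV"

definition pi_dense :: "(nat \<Rightarrow> nat) set \<Rightarrow> bool" where
  "pi_dense A \<longleftrightarrow> (\<forall>y. infinite {n. std_leaf (y @ [n]) \<subseteq> A})"

end

theory Submission
  imports Defs
begin

text \<open>The tree on \<open>Y\<close> is obtained by searching through the standard tree \<open>S\<close>. A start node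
  owns the trace on \<open>Y\<close> of a cone of \<open>S\<close> that already lies inside \<open>U 0, \<dots>, U (k - 1)\<close>; below
  it, search nodes walk down \<open>S\<close> one coordinate at a time until a cone inside \<open>U k\<close> is reached.
  Such a cone exists below every point of \<open>Y\<close> because \<open>U k\<close> is open, and infinitely many are
  available at every node because \<open>U k\<close> is \<open>\<pi>\<close>-dense; labelling them bounds the depth of every
  search, so each branch runs through all the phases and its fruit is a single point of \<open>Y\<close>.
  The sons of a search node correspond injectively to successors in \<open>S\<close>, so a cofinite shoot of
  \<open>S\<close> yields a cofinite shoot of the new tree, and the new tree grows into \<open>Y\<close> because \<open>S\<close> grows
  into the whole space.\<close>

definition initial_seg :: "(nat \<Rightarrow> 'a) \<Rightarrow> nat \<Rightarrow> 'a list" where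
  "initial_seg q n = map q [0..<n]"

lemma length_initial_seg [simp]: "length (initial_seg q n) = n"
  by (simp add: initial_seg_def)

lemma nth_initial_seg [simp]: "i < n \<Longrightarrow> initial_seg q n ! i = q i"
  by (simp add: initial_seg_def)

lemma initial_seg_Suc: "initial_seg q (Suc n) = initial_seg q n @ [q n]"
  by (simp add: initial_seg_def)

lemma take_initial_seg: "j \<le> n \<Longrightarrow> take j (initial_seg q n) = initial_seg q j"
  by (simp add: initial_seg_def take_map)

lemma prefix_initial_seg_iff:
  "prefix w (initial_seg q n) \<longleftrightarrow> w = initial_seg q (length w) \<and> length w \<le> n"
  by (metis length_initial_seg prefix_length_le take_initial_seg take_is_prefix prefix_def
      append_eq_conv_conj)

lemma mem_std_leaf_iff: "q \<in> std_leaf w \<longleftrightarrow> w = initial_seg q (length w)"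
  by (auto simp: std_leaf_def list_eq_iff_nth_eq)

lemma initial_seg_in_std_leaf: "q \<in> std_leaf (initial_seg q n)"
  by (simp add: mem_std_leaf_iff)

lemma std_leaf_Nil [simp]: "std_leaf [] = UNIV"
  by (simp add: std_leaf_def)

lemma std_leaf_antimono: "prefix u w \<Longrightarrow> std_leaf w \<subseteq> std_leaf u"
  by (auto simp: std_leaf_def prefix_def nth_append)

lemma std_leaf_snoc_disjoint: "m \<noteq> m' \<Longrightarrow> std_leaf (v @ [m]) \<inter> std_leaf (v @ [m']) = {}"
  by (force simp: std_leaf_def)

lemma openin_baire_space_cone:
  assumes "openin baire_space V" "q \<in> V"
  shows "\<exists>i. std_leaf (initial_seg q i) \<subseteq> V"
proof -
  obtain W where W: "finite {i. W i \<noteq> UNIV}" "q \<in> Pi\<^sub>E UNIV W" "Pi\<^sub>E UNIV W \<subseteq> V"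
    using assms unfolding baire_space_def openin_product_topology_alt by auto
  obtain N where N: "\<And>i. W i \<noteq> UNIV \<Longrightarrow> i < N"
    using W(1) finite_nat_set_iff_bounded by auto
  have "std_leaf (initial_seg q N) \<subseteq> Pi\<^sub>E UNIV W"
  proof
    fix r assume r: "r \<in> std_leaf (initial_seg q N)"
    have "r i \<in> W i" for i
      using N[of i] r W(2) by (cases "i < N") (auto simp: std_leaf_def)
    then show "r \<in> Pi\<^sub>E UNIV W" by auto
  qed
  with W(3) show ?thesis by blast
qed

lemma shoot_cofinite_sons:
  assumes "finite E"
  shows "(\<Union>n\<in>-E. F (x @ [n])) \<in> shoot F x"
proof -
  have "sons x - (\<lambda>n. x @ [n]) ` (-E) \<subseteq> (\<lambda>n. x @ [n]) ` E"
    unfolding sons_def by auto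
  then have "finite (sons x - (\<lambda>n. x @ [n]) ` (-E))"
    using assms finite_subset by blast
  moreover have "(\<lambda>n. x @ [n]) ` (-E) \<subseteq> sons x"
    unfolding sons_def by auto
  ultimately show ?thesis
    unfolding shoot_def by (intro CollectI exI[of _ "(\<lambda>n. x @ [n]) ` (-E)"]) auto
qed

lemma shoot_std_leaf_cofinite:
  assumes "G \<in> shoot std_leaf z"
  obtains E where "finite E" "\<And>n. n \<notin> E \<Longrightarrow> std_leaf (z @ [n]) \<subseteq> G"
proof -
  obtain C where C: "G = (\<Union>s\<in>C. std_leaf s)" "C \<subseteq> sons z" "finite (sons z - C)"
    using assms unfolding shoot_def by blast
  define E where "E = {n. z @ [n] \<notin> C}"
  have "E \<subseteq> (\<lambda>s. s ! length z) ` (sons z - C)"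
    unfolding E_def sons_def by (auto intro: rev_image_eqI)
  then have "finite E"
    using C(3) finite_subset by blast
  moreover have "std_leaf (z @ [n]) \<subseteq> G" if "n \<notin> E" for n
    using that C(1) unfolding E_def by blast
  ultimately show ?thesis using that by blast
qed

lemma skel_branch_prefix_closed:
  assumes B: "skel_branch B" and "x \<in> B" "prefix y x"
  shows "y \<in> B"
proof -
  have "prefix y z \<or> prefix z y" if "z \<in> B" for z
    using B \<open>x \<in> B\<close> that \<open>prefix y x\<close> unfolding skel_branch_def skel_chain_def
    by (metis prefix_order.order_trans prefix_same_cases)
  then have "skel_chain (insert y B)"
    using B unfolding skel_branch_def skel_chain_def by blast
  then show ?thesis
    using B unfolding skel_branch_def by blast
qed

lemma skel_branch_unbounded:
  assumes B: "skel_branch B" and "x \<in> B"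
  shows "\<exists>y\<in>B. length x < length y"
proof (rule ccontr)
  assume "\<not> (\<exists>y\<in>B. length x < length y)"
  then have "prefix y x" if "y \<in> B" for y
  proof -
    have "prefix y x \<or> prefix x y"
      using B \<open>x \<in> B\<close> that unfolding skel_branch_def skel_chain_def by blast
    moreover have "length y \<le> length x"
      using \<open>\<not> (\<exists>y\<in>B. length x < length y)\<close> that by auto
    ultimately show ?thesis by (auto simp: prefix_def)
  qed
  then have "skel_chain (insert (x @ [0]) B)"
    using B unfolding skel_branch_def skel_chain_def
    by (auto intro: prefix_order.order_trans)
  then have "x @ [0] \<in> B"
    using B unfolding skel_branch_def by blast
  with \<open>\<not> (\<exists>y\<in>B. length x < length y)\<close> show False by auto
qed

lemma skel_branch_has_length:
  assumes B: "skel_branch B"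
  shows "\<exists>x\<in>B. length x = n"
proof -
  have "\<exists>x\<in>B. n \<le> length x"
  proof (induction n)
    case 0
    have "skel_chain (insert [] B)"
      using B unfolding skel_branch_def skel_chain_def by auto
    then have "[] \<in> B"
      using B unfolding skel_branch_def by blast
    then show ?case by auto
  next
    case (Suc n)
    then show ?case
      using skel_branch_unbounded[OF B] by (meson le_less_trans Suc_le_eq)
  qed
  then show ?thesis
    using skel_branch_prefix_closed[OF B] by (metis length_take min_absorb2 take_is_prefix)
qed

lemma skel_branch_eq_range:
  assumes B: "skel_branch B"
  shows "\<exists>a. B = range (initial_seg a)"
proof -
  have same_length: "x = y" if "x \<in> B" "y \<in> B" "length x = length y" for x y
  proof -
    have "prefix x y \<or> prefix y x"
      using B that unfolding skel_branch_def skel_chain_def by blast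
    with \<open>length x = length y\<close> show ?thesis by (auto simp: prefix_def)
  qed
  define el where "el n = (SOME x. x \<in> B \<and> length x = n)" for n
  have el: "el n \<in> B" "length (el n) = n" for n
    using someI_ex[OF skel_branch_has_length[OF B, of n, unfolded Bex_def]]
    unfolding el_def by auto
  define a where "a i = el (Suc i) ! i" for i
  have "x = initial_seg a (length x)" if "x \<in> B" for x
  proof (rule nth_equalityI)
    fix i assume "i < length x"
    then have "take (Suc i) x = el (Suc i)"
      using same_length el skel_branch_prefix_closed[OF B that take_is_prefix] by simp
    with \<open>i < length x\<close> show "x ! i = initial_seg a (length x) ! i"
      unfolding a_def by (metis lessI nth_initial_seg nth_take)
  qed simp
  then have "B = range (initial_seg a)"
    using el by (auto intro: rev_image_eqI) metis
  then show ?thesis by blast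
qed

lemma grows_into_subtopology_shadowing:
  assumes grows: "grows_into X std_leaf"
    and nonempty: "\<And>x. F x \<noteq> {}"
    and shadow: "\<And>p z. p \<in> Y \<Longrightarrow> p \<in> std_leaf z \<Longrightarrow>
      \<exists>x e. p \<in> F x \<and> inj e \<and> (\<forall>n. F (x @ [n]) \<subseteq> std_leaf (z @ [e n]) \<inter> Y)"
  shows "grows_into (subtopology X Y) F"
  unfolding grows_into_def
proof (intro ballI allI impI)
  fix p W
  assume p: "p \<in> topspace (subtopology X Y)" and W: "openin (subtopology X Y) W \<and> p \<in> W"
  then obtain V where V: "openin X V" "W = V \<inter> Y"
    by (auto simp: openin_subtopology)
  with W have "p \<in> V" "p \<in> Y" by auto
  with p V(1) grows obtain z where z: "p \<in> std_leaf z" "shoot std_leaf z \<ggreater> {V}"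
    unfolding grows_into_def scope_def by auto
  with \<open>p \<in> V\<close> obtain G where "G \<in> shoot std_leaf z" "G \<subseteq> V"
    unfolding pi_base_refines_def by blast
  then obtain E where E: "finite E" "\<And>n. n \<notin> E \<Longrightarrow> std_leaf (z @ [n]) \<subseteq> V"
    by (metis shoot_std_leaf_cofinite subset_trans)
  obtain x e where x: "p \<in> F x" "inj e" "\<And>n. F (x @ [n]) \<subseteq> std_leaf (z @ [e n]) \<inter> Y"
    using shadow[OF \<open>p \<in> Y\<close> z(1)] by blast
  define G' where "G' = (\<Union>n\<in>-(e -` E). F (x @ [n]))"
  have fin: "finite (e -` E)"
    using E(1) x(2) by (simp add: finite_vimageI)
  then have "G' \<in> shoot F x"
    unfolding G'_def by (rule shoot_cofinite_sons)
  moreover have "G' \<subseteq> W"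
    using x(3) E(2) V(2) unfolding G'_def by blast
  moreover have "G' \<noteq> {}"
    using fin nonempty ex_new_if_finite[OF infinite_UNIV_nat fin] unfolding G'_def by blast
  ultimately have "shoot F x \<ggreater> {W}"
    unfolding pi_base_refines_def by blast
  with x(1) show "\<exists>z\<in>scope F p. shoot F z \<ggreater> {W}"
    unfolding scope_def by blast
qed

datatype search_state =
    Start "nat list" nat
  | Search "nat list" nat "nat list" nat

locale pi_dense_G_delta =
  fixes U :: "nat \<Rightarrow> (nat \<Rightarrow> nat) set"
  assumes open_U: "\<And>k. openin baire_space (U k)"
    and pi_dense_U: "\<And>k. pi_dense (U k)"
begin

definition cone_in :: "nat \<Rightarrow> nat list \<Rightarrow> bool" where
  "cone_in k w \<longleftrightarrow> std_leaf w \<subseteq> U k"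

definition good_succs :: "nat \<Rightarrow> nat list \<Rightarrow> nat set" where
  "good_succs k w = {m. cone_in k (w @ [m])}"

lemma infinite_good_succs: "infinite (good_succs k w)"
  using pi_dense_U[of k] unfolding pi_dense_def good_succs_def cone_in_def by blast

text \<open>A pairing function splits the good successors of \<open>w\<close> into infinitely many infinite
  classes, labelled by the numbers above \<open>length w\<close> (the label of a successor that is not good
  is junk and never used). A search for a cone inside \<open>U k\<close> that is committed to the label \<open>t\<close>
  therefore ends before depth \<open>t\<close>, and this is what makes every branch of the tree pass through
  all the \<open>U k\<close>.\<close>

definition label :: "nat \<Rightarrow> nat list \<Rightarrow> nat \<Rightarrow> nat" where
  "label k w m = Suc (length w) + fst (prod_decode (inv_into UNIV (enumerate (good_succs k w)) m))"

definition searching :: "nat \<Rightarrow> nat list \<Rightarrow> nat list \<Rightarrow> bool" where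
  "searching k u w \<longleftrightarrow>
     prefix u w \<and> (\<forall>j. length u < j \<and> j \<le> length w \<longrightarrow> \<not> cone_in k (take j w))"

definition entry_region :: "nat \<Rightarrow> nat list \<Rightarrow> nat \<Rightarrow> (nat \<Rightarrow> nat) set" where
  "entry_region k u t =
     \<Union>{std_leaf (w @ [m]) | w m. searching k u w \<and> cone_in k (w @ [m]) \<and> label k w m = t}"

definition admissible :: "nat \<Rightarrow> nat list \<Rightarrow> nat \<Rightarrow> nat set" where
  "admissible k v t =
     {m. cone_in k (v @ [m]) \<and> label k v m = t} \<union> {m. \<not> cone_in k (v @ [m]) \<and> Suc (length v) < t}"

text \<open>\<open>Start u k\<close> owns the cone at \<open>u\<close>, which already lies inside \<open>U 0, \<dots>, U (k - 1)\<close>;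
  \<open>Search u k v t\<close> owns the points below \<open>v\<close> whose first cone inside \<open>U k\<close> beyond \<open>u\<close> carries
  the label \<open>t\<close>.\<close>

fun region :: "search_state \<Rightarrow> (nat \<Rightarrow> nat) set" where
  "region (Start u k) = std_leaf u"
| "region (Search u k v t) = std_leaf v \<inter> entry_region k u t"

fun stem :: "search_state \<Rightarrow> nat list" where
  "stem (Start u k) = u"
| "stem (Search u k v t) = v"

fun child :: "search_state \<Rightarrow> nat \<Rightarrow> search_state" where
  "child (Start u k) n = Search u k u (Suc (length u) + n)"
| "child (Search u k v t) n =
     (if cone_in k (v @ [enumerate (admissible k v t) n])
      then Start (v @ [enumerate (admissible k v t) n]) (Suc k)
      else Search u k (v @ [enumerate (admissible k v t) n]) t)"

fun valid :: "search_state \<Rightarrow> bool" where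
  "valid (Start u k) \<longleftrightarrow> (\<forall>j<k. cone_in j u)"
| "valid (Search u k v t) \<longleftrightarrow> (\<forall>j<k. cone_in j u) \<and> searching k u v \<and> length v < t"

definition node_state :: "nat list \<Rightarrow> search_state" where
  "node_state x = foldl child (Start [] 0) x"

definition leaf :: "nat list \<Rightarrow> (nat \<Rightarrow> nat) set" where
  "leaf x = region (node_state x) \<inter> (\<Inter>k. U k)"

lemma node_state_Nil [simp]: "node_state [] = Start [] 0"
  by (simp add: node_state_def)

lemma node_state_snoc: "node_state (x @ [n]) = child (node_state x) n"
  by (simp add: node_state_def)

lemma leaf_snoc: "leaf (x @ [n]) = region (child (node_state x) n) \<inter> (\<Inter>k. U k)"
  by (simp add: leaf_def node_state_snoc)

lemma length_less_label: "length w < label k w m"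
  by (simp add: label_def)

lemma infinite_admissible:
  assumes "length v < t"
  shows "infinite (admissible k v t)"
proof -
  let ?e = "enumerate (good_succs k v)"
  have inj: "inj ?e"
    using inj_enumerate infinite_good_succs by blast
  define f where "f j = ?e (prod_encode (t - Suc (length v), j))" for j
  have "inj f"
    using inj unfolding f_def inj_def by (metis prod_encode_eq prod.inject)
  moreover have "range f \<subseteq> admissible k v t"
  proof
    fix m assume "m \<in> range f"
    then obtain j where m: "m = f j" by blast
    then have "m \<in> good_succs k v"
      unfolding f_def using enumerate_in_set infinite_good_succs by blast
    moreover have "inv_into UNIV ?e m = prod_encode (t - Suc (length v), j)"
      using m inj unfolding f_def by (simp add: inv_into_f_f)
    ultimately show "m \<in> admissible k v t"
      using assms unfolding admissible_def good_succs_def label_def by simp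
  qed
  ultimately show ?thesis
    using range_inj_infinite infinite_super by blast
qed

lemma enumerate_admissible:
  "length v < t \<Longrightarrow> enumerate (admissible k v t) n \<in> admissible k v t"
  by (intro enumerate_in_set infinite_admissible)

lemma inj_enumerate_admissible: "length v < t \<Longrightarrow> inj (enumerate (admissible k v t))"
  by (intro inj_enumerate infinite_admissible)

lemma valid_child:
  assumes "valid s"
  shows "valid (child s n)"
proof (cases s)
  case (Start u k)
  with assms show ?thesis by (auto simp: searching_def)
next
  case (Search u k v t)
  let ?m = "enumerate (admissible k v t) n"
  from assms Search have prev: "\<forall>j<k. cone_in j u" and srch: "searching k u v" and "length v < t"
    by auto
  then have m: "?m \<in> admissible k v t"
    using enumerate_admissible by blast
  have "prefix u (v @ [?m])"
    using srch unfolding searching_def by auto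
  show ?thesis
  proof (cases "cone_in k (v @ [?m])")
    case True
    with prev std_leaf_antimono[OF \<open>prefix u (v @ [?m])\<close>] have "\<forall>j<Suc k. cone_in j (v @ [?m])"
      unfolding cone_in_def by (metis less_Suc_eq subset_trans)
    with Search True show ?thesis by simp
  next
    case False
    with m have "Suc (length v) < t"
      unfolding admissible_def by simp
    moreover have "searching k u (v @ [?m])"
      using srch False \<open>prefix u (v @ [?m])\<close> unfolding searching_def
      by (auto simp: le_Suc_eq)
    ultimately show ?thesis
      using Search False prev by simp
  qed
qed

lemma valid_node_state: "valid (node_state x)"
  by (induction x rule: rev_induct) (simp_all add: node_state_snoc valid_child)

lemma region_subset_stem: "region s \<subseteq> std_leaf (stem s)"
  by (cases s) auto

lemma searching_initial_seg_iff:
  "searching k u (initial_seg q j) \<longleftrightarrow>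
     u = initial_seg q (length u) \<and> length u \<le> j \<and>
     (\<forall>i. length u < i \<and> i \<le> j \<longrightarrow> \<not> cone_in k (initial_seg q i))"
  unfolding searching_def prefix_initial_seg_iff by (auto simp: take_initial_seg)

lemma mem_entry_region_iff:
  "q \<in> entry_region k u t \<longleftrightarrow>
     (\<exists>j. searching k u (initial_seg q j) \<and> cone_in k (initial_seg q (Suc j)) \<and>
          label k (initial_seg q j) (q j) = t)"
proof
  assume "q \<in> entry_region k u t"
  then obtain w m where wm: "q \<in> std_leaf (w @ [m])" "searching k u w"
      "cone_in k (w @ [m])" "label k w m = t"
    unfolding entry_region_def by blast
  then have "w @ [m] = initial_seg q (Suc (length w))"
    using mem_std_leaf_iff by simp
  then have "w = initial_seg q (length w)" "m = q (length w)"
    by (simp_all add: initial_seg_Suc)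
  with wm show "\<exists>j. searching k u (initial_seg q j) \<and> cone_in k (initial_seg q (Suc j)) \<and>
      label k (initial_seg q j) (q j) = t"
    by (metis initial_seg_Suc)
next
  assume "\<exists>j. searching k u (initial_seg q j) \<and> cone_in k (initial_seg q (Suc j)) \<and>
      label k (initial_seg q j) (q j) = t"
  then obtain j where "searching k u (initial_seg q j)" "cone_in k (initial_seg q j @ [q j])"
      "label k (initial_seg q j) (q j) = t"
    by (auto simp: initial_seg_Suc)
  moreover have "q \<in> std_leaf (initial_seg q j @ [q j])"
    by (metis initial_seg_Suc initial_seg_in_std_leaf)
  ultimately show "q \<in> entry_region k u t"
    unfolding entry_region_def by blast
qed

lemma searching_entry_unique:
  assumes "searching k u (initial_seg q j)" "cone_in k (initial_seg q (Suc j))"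
    and "searching k u (initial_seg q j')" "cone_in k (initial_seg q (Suc j'))"
  shows "j = j'"
proof -
  have "\<not> i < i'"
    if "searching k u (initial_seg q i)" "cone_in k (initial_seg q (Suc i))"
      "searching k u (initial_seg q i')" for i i'
    using that unfolding searching_initial_seg_iff by (meson Suc_leI le_imp_less_Suc)
  with assms show ?thesis by (meson linorder_neqE_nat)
qed

lemma child_region_subset:
  assumes "valid s"
  shows "region (child s n) \<subseteq> region s"
proof (cases s)
  case (Start u k)
  then show ?thesis by auto
next
  case (Search u k v t)
  let ?m = "enumerate (admissible k v t) n"
  from assms Search have srch: "searching k u v" and "length v < t" by auto
  then have m: "?m \<in> admissible k v t"
    using enumerate_admissible by blast
  have "std_leaf (v @ [?m]) \<subseteq> std_leaf v"
    by (simp add: std_leaf_antimono)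
  moreover have "std_leaf (v @ [?m]) \<subseteq> entry_region k u t" if "cone_in k (v @ [?m])"
    using that m srch unfolding admissible_def entry_region_def by blast
  ultimately show ?thesis
    using Search by auto
qed

lemma exists_first_entry:
  assumes "q \<in> U k" "u = initial_seg q (length u)"
  shows "\<exists>j. searching k u (initial_seg q j) \<and> cone_in k (initial_seg q (Suc j))"
proof -
  obtain i where i: "cone_in k (initial_seg q i)"
    using openin_baire_space_cone[OF open_U assms(1)] unfolding cone_in_def by blast
  define J where "J = {j. length u < j \<and> cone_in k (initial_seg q j)}"
  have "max i (Suc (length u)) \<in> J"
    using i std_leaf_antimono[of "initial_seg q i" "initial_seg q (max i (Suc (length u)))"]
    unfolding J_def cone_in_def by (auto simp: prefix_initial_seg_iff)
  then have "Least (\<lambda>j. j \<in> J) \<in> J" by (rule LeastI)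
  then obtain j where j: "Suc j \<in> J" "Suc j = Least (\<lambda>j. j \<in> J)"
    unfolding J_def by (metis (lifting) Suc_pred' gr0I less_nat_zero_code mem_Collect_eq)
  have "\<not> cone_in k (initial_seg q i')" if "length u < i'" "i' \<le> j" for i'
    using that not_less_Least[of i' "\<lambda>j. j \<in> J"] j(2) unfolding J_def by auto
  with j(1) assms(2) show ?thesis
    unfolding J_def searching_initial_seg_iff by (intro exI[of _ j]) auto
qed

lemma admissible_next:
  assumes "searching k u v" "q \<in> std_leaf v" "q \<in> entry_region k u t"
  shows "q (length v) \<in> admissible k v t"
proof -
  have v: "v = initial_seg q (length v)"
    using assms(2) mem_std_leaf_iff by blast
  obtain j where j: "searching k u (initial_seg q j)" "cone_in k (initial_seg q (Suc j))"
      "label k (initial_seg q j) (q j) = t"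
    using assms(3) mem_entry_region_iff by blast
  have sv: "searching k u (initial_seg q (length v))"
    using assms(1) v by simp
  have "length v \<le> j"
    using sv j(1,2) unfolding searching_initial_seg_iff by (meson Suc_leI le_imp_less_Suc not_le)
  then consider "j = length v" | "length v < j" by linarith
  then show ?thesis
  proof cases
    case 1
    with j v show ?thesis
      unfolding admissible_def by (auto simp: initial_seg_Suc)
  next
    case 2
    then have "\<not> cone_in k (initial_seg q (Suc (length v)))"
      using j(1) sv unfolding searching_initial_seg_iff by auto
    moreover have "Suc (length v) < t"
      using 2 j(3) length_less_label[of "initial_seg q j" k "q j"] by simp
    ultimately show ?thesis
      using v unfolding admissible_def by (metis (mono_tags, lifting) UnI2 initial_seg_Suc mem_Collect_eq)
  qed
qed

lemma child_region_cover:
  assumes "valid s" "q \<in> region s" "q \<in> (\<Inter>k. U k)"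
  shows "\<exists>n. q \<in> region (child s n)"
proof (cases s)
  case (Start u k)
  then have "u = initial_seg q (length u)"
    using assms(2) mem_std_leaf_iff by simp
  with assms(3) obtain j where j: "searching k u (initial_seg q j)" "cone_in k (initial_seg q (Suc j))"
    using exists_first_entry by blast
  define t where "t = label k (initial_seg q j) (q j)"
  have "length u < t"
    using j(1) length_less_label[of "initial_seg q j" k "q j"]
    unfolding t_def searching_initial_seg_iff by simp
  moreover have "q \<in> entry_region k u t"
    unfolding mem_entry_region_iff t_def using j by blast
  ultimately have "q \<in> region (child s (t - Suc (length u)))"
    using Start assms(2) by simp
  then show ?thesis by blast
next
  case (Search u k v t)
  with assms have "searching k u v" "length v < t" "q \<in> std_leaf v" "q \<in> entry_region k u t"
    by auto
  then obtain n where n: "enumerate (admissible k v t) n = q (length v)"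
    using admissible_next enumerate_Ex[OF infinite_admissible] by metis
  have "q \<in> std_leaf (v @ [q (length v)])"
    using \<open>q \<in> std_leaf v\<close> mem_std_leaf_iff by (metis initial_seg_Suc initial_seg_in_std_leaf)
  with n Search assms(2) have "q \<in> region (child s n)"
    by auto
  then show ?thesis by blast
qed

lemma child_region_disjoint:
  assumes "valid s" "n \<noteq> n'"
  shows "region (child s n) \<inter> region (child s n') = {}"
proof (cases s)
  case (Start u k)
  show ?thesis
  proof (rule ccontr)
    assume "region (child s n) \<inter> region (child s n') \<noteq> {}"
    then obtain q where "q \<in> entry_region k u (Suc (length u) + n)"
        "q \<in> entry_region k u (Suc (length u) + n')"
      using Start by auto
    then obtain j j' where
        "searching k u (initial_seg q j)" "cone_in k (initial_seg q (Suc j))"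
        "label k (initial_seg q j) (q j) = Suc (length u) + n"
        "searching k u (initial_seg q j')" "cone_in k (initial_seg q (Suc j'))"
        "label k (initial_seg q j') (q j') = Suc (length u) + n'"
      unfolding mem_entry_region_iff by blast
    with assms(2) show False
      using searching_entry_unique by force
  qed
next
  case (Search u k v t)
  with assms(1) have "length v < t" by simp
  then have "enumerate (admissible k v t) n \<noteq> enumerate (admissible k v t) n'"
    using inj_enumerate_admissible assms(2) unfolding inj_def by blast
  moreover have "region (child s n) \<subseteq> std_leaf (v @ [enumerate (admissible k v t) n])"
    "region (child s n') \<subseteq> std_leaf (v @ [enumerate (admissible k v t) n'])"
    using Search by auto
  ultimately show ?thesis
    using std_leaf_snoc_disjoint by blast
qed

definition branch_state :: "(nat \<Rightarrow> nat) \<Rightarrow> nat \<Rightarrow> search_state" where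
  "branch_state a n = node_state (initial_seg a n)"

lemma branch_state_0 [simp]: "branch_state a 0 = Start [] 0"
  by (simp add: branch_state_def initial_seg_def)

lemma branch_state_Suc: "branch_state a (Suc n) = child (branch_state a n) (a n)"
  by (simp add: branch_state_def initial_seg_Suc node_state_snoc)

lemma valid_branch_state: "valid (branch_state a n)"
  by (simp add: branch_state_def valid_node_state)

lemma prefix_stem_branch_state:
  "m \<le> n \<Longrightarrow> prefix (stem (branch_state a m)) (stem (branch_state a n))"
proof (induction n rule: dec_induct)
  case (step n)
  have "prefix (stem s) (stem (child s i))" for s i
    by (cases s) auto
  with step.IH show ?case
    by (metis branch_state_Suc prefix_order.order_trans)
qed simp

lemma length_stem_branch_state: "i < length (stem (branch_state a (2 * i + 2)))"
proof -
  define rank where "rank s = 2 * length (stem s) + (case s of Start _ _ \<Rightarrow> 0 | Search _ _ _ _ \<Rightarrow> 1)"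
    for s
  \<comment> \<open>every step either extends the stem or turns a \<open>Start\<close> into a \<open>Search\<close>\<close>
  have rank_child: "rank s < rank (child s n)" for s n
    unfolding rank_def by (cases s) auto
  have "n \<le> rank (branch_state a n)" for n
  proof (induction n)
    case (Suc n)
    then show ?case
      using rank_child[of "branch_state a n" "a n"] by (simp add: branch_state_Suc)
  qed simp
  moreover have "rank s \<le> 2 * length (stem s) + 1" for s
    unfolding rank_def by (auto split: search_state.split)
  ultimately have "2 * i + 2 \<le> 2 * length (stem (branch_state a (2 * i + 2))) + 1"
    by (meson le_trans)
  then show ?thesis by linarith
qed

definition branch_point :: "(nat \<Rightarrow> nat) \<Rightarrow> nat \<Rightarrow> nat" where
  "branch_point a i = stem (branch_state a (2 * i + 2)) ! i"

lemma branch_point_in_stem: "branch_point a \<in> std_leaf (stem (branch_state a n))"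
  unfolding std_leaf_def
proof (intro CollectI allI impI)
  fix i assume i: "i < length (stem (branch_state a n))"
  define N where "N = max n (2 * i + 2)"
  have "prefix (stem (branch_state a n)) (stem (branch_state a N))"
    "prefix (stem (branch_state a (2 * i + 2))) (stem (branch_state a N))"
    by (simp_all add: N_def prefix_stem_branch_state)
  with i length_stem_branch_state[of i a] show "branch_point a i = stem (branch_state a n) ! i"
    unfolding branch_point_def by (metis prefix_def nth_append)
qed

lemma branch_search_terminates:
  "branch_state a n = Search u k v t \<Longrightarrow>
     branch_point a \<in> entry_region k u t \<and> (\<exists>n' w. branch_state a n' = Start w (Suc k))"
proof (induction "t - length v" arbitrary: n v rule: less_induct)
  case less
  let ?m = "enumerate (admissible k v t) (a n)"
  from valid_branch_state[of a n] less.prems have srch: "searching k u v" and "length v < t"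
    by auto
  then have m: "?m \<in> admissible k v t"
    using enumerate_admissible by blast
  show ?case
  proof (cases "cone_in k (v @ [?m])")
    case True
    then have step: "branch_state a (Suc n) = Start (v @ [?m]) (Suc k)"
      using less.prems by (simp add: branch_state_Suc)
    have "std_leaf (v @ [?m]) \<subseteq> entry_region k u t"
      using True m srch unfolding admissible_def entry_region_def by blast
    with step show ?thesis
      using branch_point_in_stem[of a "Suc n"] by auto
  next
    case False
    then have "branch_state a (Suc n) = Search u k (v @ [?m]) t"
      using less.prems by (simp add: branch_state_Suc)
    moreover have "t - length (v @ [?m]) < t - length v"
      using False m unfolding admissible_def by auto
    ultimately show ?thesis
      using less.hyps by blast
  qed
qed

lemma branch_reaches_Start: "\<exists>n u. branch_state a n = Start u k"
proof (induction k)
  case (Suc k)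
  then obtain n u where "branch_state a n = Start u k" by blast
  then have "branch_state a (Suc n) = Search u k u (Suc (length u) + a n)"
    by (simp add: branch_state_Suc)
  then show ?case
    using branch_search_terminates by blast
qed (metis branch_state_0)

lemma branch_point_in_Inter: "branch_point a \<in> (\<Inter>k. U k)"
proof
  fix k
  obtain n u where s: "branch_state a n = Start u (Suc k)"
    using branch_reaches_Start by blast
  then have "cone_in k u"
    using valid_branch_state[of a n] by simp
  moreover have "branch_point a \<in> std_leaf u"
    using branch_point_in_stem[of a n] s by simp
  ultimately show "branch_point a \<in> U k"
    unfolding cone_in_def by blast
qed

lemma branch_point_in_region: "branch_point a \<in> region (branch_state a n)"
  using branch_point_in_stem[of a n] branch_search_terminates[of a n]
  by (cases "branch_state a n") auto

lemma branch_region_unique: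
  assumes "\<And>n. r \<in> region (branch_state a n)"
  shows "r = branch_point a"
proof
  fix i
  have "r \<in> std_leaf (stem (branch_state a (2 * i + 2)))"
    using assms region_subset_stem by blast
  then show "r i = branch_point a i"
    unfolding std_leaf_def branch_point_def using length_stem_branch_state by blast
qed

lemma leaf_initial_seg: "leaf (initial_seg a n) = region (branch_state a n) \<inter> (\<Inter>k. U k)"
  by (simp add: leaf_def branch_state_def)

lemma leaf_nonempty: "leaf x \<noteq> {}"
proof -
  define a where "a i = (if i < length x then x ! i else 0)" for i
  have "initial_seg a (length x) = x"
    by (rule nth_equalityI) (auto simp: a_def)
  then have "branch_point a \<in> leaf x"
    using branch_point_in_region branch_point_in_Inter leaf_initial_seg[of a "length x"] by simp
  then show ?thesis by blast
qed

lemma mem_leaf_child: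
  assumes "p \<in> leaf x"
  obtains n where "p \<in> leaf (x @ [n])"
proof -
  from assms have p: "p \<in> region (node_state x)" "p \<in> (\<Inter>k. U k)"
    unfolding leaf_def by auto
  then obtain n where "p \<in> region (child (node_state x) n)"
    using child_region_cover valid_node_state by blast
  with p(2) show thesis
    using that by (simp add: leaf_snoc)
qed

lemma locally_strict_leaf: "locally_strict leaf"
  unfolding locally_strict_def
proof (intro allI impI conjI ballI)
  fix x
  show "leaf x = (\<Union>s\<in>sons x. leaf s)"
  proof
    show "leaf x \<subseteq> (\<Union>s\<in>sons x. leaf s)"
    proof
      fix p assume "p \<in> leaf x"
      then obtain n where "p \<in> leaf (x @ [n])"
        by (rule mem_leaf_child)
      moreover have "x @ [n] \<in> sons x"
        unfolding sons_def by blast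
      ultimately show "p \<in> (\<Union>s\<in>sons x. leaf s)" by blast
    qed
    show "(\<Union>s\<in>sons x. leaf s) \<subseteq> leaf x"
    proof
      fix p assume "p \<in> (\<Union>s\<in>sons x. leaf s)"
      then obtain n where "p \<in> leaf (x @ [n])"
        unfolding sons_def by blast
      then show "p \<in> leaf x"
        using child_region_subset[OF valid_node_state, of x n]
        unfolding leaf_def node_state_snoc by blast
    qed
  qed
  fix s s' assume "s \<in> sons x" "s' \<in> sons x" "s \<noteq> s'"
  then obtain n n' where s: "s = x @ [n]" "s' = x @ [n']" and "n \<noteq> n'"
    unfolding sons_def by auto
  then have "region (child (node_state x) n) \<inter> region (child (node_state x) n') = {}"
    by (intro child_region_disjoint valid_node_state)
  then show "leaf s \<inter> leaf s' = {}"
    unfolding s leaf_snoc by blast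
qed

lemma strict_branches_leaf: "strict_branches leaf"
  unfolding strict_branches_def
proof (intro allI impI)
  fix B assume "skel_branch B"
  then obtain a where B: "B = range (initial_seg a)"
    using skel_branch_eq_range by blast
  have "fruit leaf B = (\<Inter>n. leaf (initial_seg a n))"
    unfolding B fruit_def by simp
  also have "\<dots> = {branch_point a}"
  proof
    show "(\<Inter>n. leaf (initial_seg a n)) \<subseteq> {branch_point a}"
    proof
      fix r assume "r \<in> (\<Inter>n. leaf (initial_seg a n))"
      then have "r \<in> region (branch_state a n)" for n
        unfolding leaf_initial_seg by blast
      then have "r = branch_point a"
        by (rule branch_region_unique)
      then show "r \<in> {branch_point a}" by simp
    qed
    show "{branch_point a} \<subseteq> (\<Inter>n. leaf (initial_seg a n))"
      using branch_point_in_region branch_point_in_Inter unfolding leaf_initial_seg by blast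
  qed
  finally show "\<exists>p. fruit leaf B = {p}" by blast
qed

lemma mem_leaf_Search_with_stem:
  assumes "p \<in> leaf x"
  shows "\<exists>x'. p \<in> leaf x' \<and> (\<exists>u k t. node_state x' = Search u k (stem (node_state x)) t)"
proof (cases "node_state x")
  case (Start u k)
  obtain n where "p \<in> leaf (x @ [n])"
    using mem_leaf_child assms by blast
  with Start show ?thesis
    by (auto simp: node_state_snoc)
next
  case (Search u k v t)
  with assms show ?thesis by auto
qed

lemma mem_leaf_Search_at:
  assumes "p \<in> (\<Inter>k. U k)"
  shows "\<exists>x u k t. p \<in> leaf x \<and> node_state x = Search u k (initial_seg p l) t"
proof (induction l)
  case 0
  have "p \<in> leaf []"
    using assms by (simp add: leaf_def)
  from mem_leaf_Search_with_stem[OF this] show ?case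
    by (simp add: initial_seg_def)
next
  case (Suc l)
  then obtain x u k t where x: "p \<in> leaf x" "node_state x = Search u k (initial_seg p l) t"
    by blast
  obtain n where n: "p \<in> leaf (x @ [n])"
    using mem_leaf_child x(1) by blast
  have "stem (node_state (x @ [n])) = initial_seg p (Suc l)"
  proof -
    have "p \<in> std_leaf (stem (node_state (x @ [n])))"
      using n region_subset_stem unfolding leaf_def by blast
    moreover have "length (stem (node_state (x @ [n]))) = Suc l"
      using x(2) by (simp add: node_state_snoc)
    ultimately show ?thesis
      using mem_std_leaf_iff by metis
  qed
  with mem_leaf_Search_with_stem[OF n] show ?case
    by auto
qed

lemma leaf_children_shadow_std_leaf:
  assumes "p \<in> (\<Inter>k. U k)" "p \<in> std_leaf z"
  shows "\<exists>x e. p \<in> leaf x \<and> inj e \<and>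
           (\<forall>n. leaf (x @ [n]) \<subseteq> std_leaf (z @ [e n]) \<inter> (\<Inter>k. U k))"
proof -
  have "z = initial_seg p (length z)"
    using assms(2) mem_std_leaf_iff by blast
  then obtain x u k t where x: "p \<in> leaf x" "node_state x = Search u k z t"
    using mem_leaf_Search_at[OF assms(1)] by metis
  then have "length z < t"
    using valid_node_state[of x] by simp
  moreover have "leaf (x @ [n]) \<subseteq> std_leaf (z @ [enumerate (admissible k z t) n]) \<inter> (\<Inter>k. U k)"
    for n
    using x(2) region_subset_stem[of "child (node_state x) n"] by (auto simp: leaf_snoc)
  ultimately show ?thesis
    using x(1) inj_enumerate_admissible by (intro exI[of _ x] exI[of _ "enumerate (admissible k z t)"]) blast
qed

lemma openin_region:
  assumes "\<And>w. openin X (std_leaf w)"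
  shows "openin X (region s)"
proof (cases s)
  case (Search u k v t)
  have "openin X (entry_region k u t)"
    unfolding entry_region_def by (rule openin_Union) (auto intro: assms)
  with Search assms show ?thesis by auto
qed (simp add: assms)

lemma pi_tree_leaf:
  assumes "topspace X = UNIV" "pi_tree X std_leaf"
  shows "pi_tree (subtopology X (\<Inter>k. U k)) leaf"
proof -
  have leaves_open: "openin X (std_leaf w)" for w
    using assms(2) unfolding pi_tree_def baire_foliage_tree_def by blast
  have grows: "grows_into X std_leaf"
    using assms(2) unfolding pi_tree_def by blast
  show ?thesis
    unfolding pi_tree_def baire_foliage_tree_def
  proof (intro conjI allI)
    show "openin (subtopology X (\<Inter>k. U k)) (leaf x)" for x
      unfolding leaf_def by (intro openin_subtopology_Int openin_region leaves_open)
    show "leaf [] = topspace (subtopology X (\<Inter>k. U k))"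
      by (simp add: leaf_def assms(1))
    show "grows_into (subtopology X (\<Inter>k. U k)) leaf"
      using grows leaf_nonempty leaf_children_shadow_std_leaf
      by (rule grows_into_subtopology_shadowing)
  qed (fact locally_strict_leaf strict_branches_leaf)+
qed

end

theorem mainTheorem3:
  fixes \<tau> :: "(nat \<Rightarrow> nat) topology" and U :: "nat \<Rightarrow> (nat \<Rightarrow> nat) set"
  assumes "topspace \<tau> = UNIV"
    and "pi_tree \<tau> std_leaf"
    and "\<And>n. openin baire_space (U n)"
    and "\<And>n. pi_dense (U n)"
  shows "\<exists>F :: nat list \<Rightarrow> (nat \<Rightarrow> nat) set. pi_tree (subtopology \<tau> (\<Inter>n. U n)) F"
proof -
  interpret pi_dense_G_delta U
    using assms(3,4) by unfold_locales
  show ?thesis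
    using pi_tree_leaf[OF assms(1,2)] by blast
qed

end
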